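(* Let $p$ be an odd prime and let $(G,H,T)$ be the envelope of a right conjugacy closed loop of order $2p$. Let $K$ be a subgroup with $H\lneq K\lneq G$, $|G:K|=2$ and $|K:H|=p$, and put $K_1=\langle T\cap K\rangle$, $H_1=H\cap K_1$. Then $|H_1|\in\{1,p\}$ and $K_1$ is elementary abelian of order $p$ or $p^2$.
   Context: For a finite loop $\mathcal{L}$ with identity $e$: $G=\langle R_a\mid a\in\mathcal L\rangle$ with $R_a\colon x\mapsto xa$, $H$ the stabilizer of $e$ in $G$, $T=\{R_a\}$; $(G,H,T)$ is the envelope; the loop is right conjugacy closed if $T$ is a union of conjugacy classes of $G$. *)

theory Defs
  imports "HOL-Algebra.Algebra"
begin

definition is_loop :: "'a set \<Rightarrow> ('a \<Rightarrow> 'a \<Rightarrow> 'a) \<Rightarrow> 'a \<Rightarrow> bool" where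
  "is_loop L f e \<longleftrightarrow> e \<in> L \<and> (\<forall>x\<in>L. \<forall>y\<in>L. f x y \<in> L)
     \<and> (\<forall>x\<in>L. f e x = x \<and> f x e = x)
     \<and> (\<forall>a\<in>L. bij_betw (\<lambda>x. f a x) L L)
     \<and> (\<forall>a\<in>L. bij_betw (\<lambda>x. f x a) L L)"

definition rtrans :: "'a set \<Rightarrow> ('a \<Rightarrow> 'a \<Rightarrow> 'a) \<Rightarrow> 'a \<Rightarrow> ('a \<Rightarrow> 'a)" where
  "rtrans L f a = restrict (\<lambda>x. f x a) L"

definition env_T :: "'a set \<Rightarrow> ('a \<Rightarrow> 'a \<Rightarrow> 'a) \<Rightarrow> ('a \<Rightarrow> 'a) set" where
  "env_T L f = rtrans L f ` L"

definition env_G :: "'a set \<Rightarrow> ('a \<Rightarrow> 'a \<Rightarrow> 'a) \<Rightarrow> ('a \<Rightarrow> 'a) monoid" where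
  "env_G L f = (BijGroup L)\<lparr>carrier := generate (BijGroup L) (env_T L f)\<rparr>"

definition env_H :: "'a set \<Rightarrow> ('a \<Rightarrow> 'a \<Rightarrow> 'a) \<Rightarrow> 'a \<Rightarrow> ('a \<Rightarrow> 'a) set" where
  "env_H L f e = {g \<in> carrier (env_G L f). g e = e}"

definition right_cc :: "'a set \<Rightarrow> ('a \<Rightarrow> 'a \<Rightarrow> 'a) \<Rightarrow> bool" where
  "right_cc L f \<longleftrightarrow> (\<forall>g \<in> carrier (env_G L f). \<forall>t \<in> env_T L f.
      g \<otimes>\<^bsub>env_G L f\<^esub> t \<otimes>\<^bsub>env_G L f\<^esub> inv\<^bsub>env_G L f\<^esub> g \<in> env_T L f)"

definition elem_abelian :: "('g, 'b) monoid_scheme \<Rightarrow> nat \<Rightarrow> bool" where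
  "elem_abelian G p \<longleftrightarrow> comm_group G \<and> (\<forall>x \<in> carrier G. x [^]\<^bsub>G\<^esub> p = \<one>\<^bsub>G\<^esub>)"

end

(*
  The K-orbit A of e has p points, and T \<inter> K consists of the p right translations R a with
  a in A.  A Sylow argument in K yields an element c of p-power order moving e; it acts on A
  as a p-cycle.  Conjugation by c permutes the p - 1 nontrivial elements of T \<inter> K (the loop is
  right conjugacy closed) in orbits of p-power length, so c centralizes T \<inter> K.  Hence every
  element of T \<inter> K acts on A as a power of c: on A these elements commute and have p-th power
  1.  Any g outside K maps A onto L - A and conjugates T \<inter> K into itself, which transports both
  facts to L - A.  Finally K1 acts transitively on A
  with point stabilizer H1 = H \<inter> K1, so |K1| = p |H1|, and an element of H1 commutes with
  T \<inter> K, hence is determined by its value at a single point of L - A; thus |H1| <= p, and as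
  H1 has exponent p, |H1| is 1 or p.
*)

theory Submission
  imports Defs
begin

lemma funpow_prime_power_period:
  fixes f :: "'b \<Rightarrow> 'b"
  assumes p: "Factorial_Ring.prime p" and fix_pk: "(f ^^ (p ^ k)) x = x" and moved: "f x \<noteq> x"
  obtains m where "p \<le> m" "(f ^^ m) x = x" "inj_on (\<lambda>i. (f ^^ i) x) {..<m}"
proof -
  define m where "m = (LEAST m. 0 < m \<and> (f ^^ m) x = x)"
  have "0 < p ^ k" using p prime_gt_0_nat by simp
  then have m: "0 < m" "(f ^^ m) x = x"
    unfolding m_def using LeastI[of "\<lambda>m. 0 < m \<and> (f ^^ m) x = x"] fix_pk by blast+
  have minimal: "(f ^^ i) x \<noteq> x" if "0 < i" "i < m" for i
    using that not_less_Least unfolding m_def by blast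
  have "(f ^^ (p ^ k mod m)) x = x"
    using funpow_mod_eq[OF m(2)] fix_pk by simp
  then have "m dvd p ^ k"
    using minimal m(1) by (metis mod_less_divisor mod_greater_zero_iff_not_dvd)
  then obtain i where i: "m = p ^ i"
    using divides_primepow_nat[OF p] by auto
  have "i \<noteq> 0" using m(2) moved i by (cases i) auto
  then have "p \<le> m" using i self_le_power[of p i] prime_ge_1_nat[OF p] by simp
  moreover have "inj_on (\<lambda>i. (f ^^ i) x) {..<m}"
  proof (rule linorder_inj_onI')
    fix a b assume "a \<in> {..<m}" "b \<in> {..<m}" "a < b"
    have "(f ^^ (m - b + a)) x = (f ^^ (m - b)) ((f ^^ a) x)" by (simp add: funpow_add)
    moreover have "(f ^^ (m - b)) ((f ^^ b) x) = x"
      using m(2) \<open>b \<in> {..<m}\<close> funpow_add[of "m - b" b f] by simp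
    moreover have "0 < m - b + a" "m - b + a < m"
      using \<open>a < b\<close> \<open>b \<in> {..<m}\<close> by auto
    ultimately show "(f ^^ a) x \<noteq> (f ^^ b) x"
      using minimal by metis
  qed
  ultimately show thesis using that m(2) by blast
qed

definition centralizer :: "('g, 'b) monoid_scheme \<Rightarrow> 'g set \<Rightarrow> 'g set" where
  "centralizer G M = {z \<in> carrier G. \<forall>m\<in>M. z \<otimes>\<^bsub>G\<^esub> m = m \<otimes>\<^bsub>G\<^esub> z}"

lemma (in group) commute_inv:
  assumes x: "x \<in> carrier G" and y: "y \<in> carrier G" and xy: "x \<otimes> y = y \<otimes> x"
  shows "inv x \<otimes> y = y \<otimes> inv x"
proof -
  have "inv x \<otimes> y = inv x \<otimes> (y \<otimes> x) \<otimes> inv x" using x y by (simp add: m_assoc)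
  also have "\<dots> = inv x \<otimes> (x \<otimes> y) \<otimes> inv x" using xy by simp
  also have "\<dots> = y \<otimes> inv x" using x y by (simp add: m_assoc[symmetric])
  finally show ?thesis .
qed

lemma (in group) subgroup_centralizer:
  assumes M: "M \<subseteq> carrier G"
  shows "subgroup (centralizer G M) G"
proof (rule subgroupI)
  show "centralizer G M \<subseteq> carrier G" by (auto simp: centralizer_def)
  show "centralizer G M \<noteq> {}"
    using M by (auto simp: centralizer_def subset_iff intro!: exI[of _ \<one>])
  fix z w assume z: "z \<in> centralizer G M" and w: "w \<in> centralizer G M"
  then have G: "z \<in> carrier G" "w \<in> carrier G" by (auto simp: centralizer_def)
  show "inv z \<in> centralizer G M"
    using z M commute_inv by (auto simp: centralizer_def subset_iff)
  have "z \<otimes> w \<otimes> m = m \<otimes> (z \<otimes> w)" if m: "m \<in> M" for m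
  proof -
    have mG: "m \<in> carrier G" using m M by blast
    have "z \<otimes> w \<otimes> m = z \<otimes> (m \<otimes> w)" using w m G mG by (simp add: centralizer_def m_assoc)
    also have "\<dots> = m \<otimes> (z \<otimes> w)" using z m G mG by (simp add: centralizer_def m_assoc[symmetric])
    finally show ?thesis .
  qed
  then show "z \<otimes> w \<in> centralizer G M" using G by (simp add: centralizer_def)
qed

lemma (in group) generate_commute:
  assumes "M \<subseteq> carrier G" and comm: "\<And>x y. x \<in> M \<Longrightarrow> y \<in> M \<Longrightarrow> x \<otimes> y = y \<otimes> x"
    and "x \<in> generate G M" "y \<in> generate G M"
  shows "x \<otimes> y = y \<otimes> x"
proof -
  have "generate G M \<subseteq> centralizer G M"
    using assms(1) comm by (intro generate_subgroup_incl subgroup_centralizer)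
      (auto simp: centralizer_def)
  then have "M \<subseteq> centralizer G (generate G M)"
    using assms(1) by (auto simp: centralizer_def subset_iff)
  then have "generate G M \<subseteq> centralizer G (generate G M)"
    using assms(1) by (intro generate_subgroup_incl subgroup_centralizer generate_incl)
  then show ?thesis using assms(3,4) by (auto simp: centralizer_def)
qed

lemma (in group) generate_pow_eq_one:
  fixes n :: nat
  assumes "M \<subseteq> carrier G" and comm: "\<And>x y. x \<in> M \<Longrightarrow> y \<in> M \<Longrightarrow> x \<otimes> y = y \<otimes> x"
    and exp: "\<And>x. x \<in> M \<Longrightarrow> x [^] n = \<one>" and x: "x \<in> generate G M"
  shows "x [^] n = \<one>"
proof -
  let ?W = "{x \<in> generate G M. x [^] n = \<one>}"
  have gen: "generate G M \<subseteq> carrier G" using assms(1) by (rule generate_incl)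
  have "subgroup ?W G"
  proof (rule subgroupI)
    fix x y assume xy: "x \<in> ?W" "y \<in> ?W"
    then have "(x \<otimes> y) [^] n = x [^] n \<otimes> y [^] n"
      using gen by (intro pow_mult_distrib generate_commute[OF assms(1) comm]) auto
    then show "x \<otimes> y \<in> ?W"
      using xy by (simp add: generate.eng)
  next
    fix x assume "x \<in> ?W" then show "inv x \<in> ?W"
      using gen by (auto simp: nat_pow_inv generate_m_inv_closed[OF assms(1)] subset_iff)
  qed (use gen in \<open>auto simp: subset_iff intro!: exI[of _ \<one>] generate.one\<close>)
  then have "generate G M \<subseteq> ?W"
    using exp by (intro generate_subgroup_incl) (auto intro: generate.incl)
  then show ?thesis using x by blast
qed

lemma (in group) card_subgroup_of_prime_exponent:
  assumes p: "Factorial_Ring.prime p" and M: "subgroup M G" "finite M"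
    and exp: "\<And>x. x \<in> M \<Longrightarrow> x [^] p = \<one>" and le: "card M \<le> p"
  shows "card M \<in> {1, p}"
proof (cases "M = {\<one>}")
  case False
  then obtain x where x: "x \<in> M" "x \<noteq> \<one>"
    using subgroup.one_closed[OF M(1)] by blast
  have xG: "x \<in> carrier G" using x M(1) subgroup.subset by blast
  have "ord x dvd p" "ord x \<noteq> 1"
    using exp[OF x(1)] pow_eq_id[OF xG] ord_eq_1[OF xG] x(2) by auto
  then have "ord x = p" using p by (auto simp: prime_nat_iff)
  then have "p = card (generate G {x})"
    using cyclic_order_is_ord[OF xG] by (simp add: order_def subgroup_generated_def xG)
  also have "\<dots> \<le> card M"
    using x M by (intro card_mono generate_subgroup_incl) auto
  finally show ?thesis using le by simp
qed simp

lemma (in group) p_element_outside_subgroup: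
  assumes p: "Factorial_Ring.prime p" and fin: "finite (carrier G)"
    and H: "subgroup H G" and index: "p dvd card (rcosets H)"
  obtains c k where "c \<in> carrier G" "c \<notin> H" "c [^] (p ^ k) = \<one>"
proof -
  define a where "a = multiplicity p (order G)"
  have order_pos: "order G \<noteq> 0"
    using fin by (auto simp: order_def)
  obtain P where P: "subgroup P G" "card P = p ^ a"
    using sylow_thm[OF p is_group _ fin, of a "order G div p ^ a"]
    unfolding a_def by (auto simp: multiplicity_dvd)
  have "\<not> P \<subseteq> H"
  proof
    assume "P \<subseteq> H"
    then have "subgroup P (G\<lparr>carrier := H\<rparr>)" by (rule subgroup_incl[OF P(1) H])
    from group.lagrange[OF subgroup_imp_group[OF H] this] have "card P dvd card H"
      by (simp add: order_def) (metis dvd_triv_right)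
    then have "p ^ Suc a dvd order G"
      using index lagrange[OF H] P(2) by (metis mult_dvd_mono power_Suc)
    then have "Suc a \<le> a"
      unfolding a_def using p order_pos by (intro multiplicity_geI) (auto simp: not_prime_unit)
    then show False by simp
  qed
  then obtain c where c: "c \<in> P" "c \<notin> H" by blast
  have "c [^]\<^bsub>G\<lparr>carrier := P\<rparr>\<^esub> order (G\<lparr>carrier := P\<rparr>) = \<one>\<^bsub>G\<lparr>carrier := P\<rparr>\<^esub>"
    using c(1) by (intro group.pow_order_eq_1 subgroup_imp_group[OF P(1)]) simp
  then have "c [^] (p ^ a) = \<one>"
    using P(2) by (simp add: nat_pow_def order_def)
  then show thesis using that c P(1) subgroup.subset by blast
qed

lemma (in group) conjugation_funpow:
  assumes "g \<in> carrier G" "x \<in> carrier G"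
  shows "((\<lambda>y. g \<otimes> y \<otimes> inv g) ^^ n) x = g [^] n \<otimes> x \<otimes> inv (g [^] n)"
proof (induction n)
  case (Suc n)
  have comm: "g \<otimes> g [^] n = g [^] n \<otimes> g"
    using assms by (simp add: nat_pow_Suc2[symmetric])
  have "g \<otimes> (g [^] n \<otimes> x \<otimes> inv (g [^] n)) \<otimes> inv g = (g \<otimes> g [^] n) \<otimes> x \<otimes> inv (g \<otimes> g [^] n)"
    using assms by (simp add: inv_mult_group m_assoc)
  then show ?case
    using Suc comm by simp
qed (use assms in simp)

lemma (in group) subgroup_nat_pow_closed:
  assumes "subgroup M G" "x \<in> M" shows "x [^] (n::nat) \<in> M"
  by (induction n) (simp_all add: assms subgroup.one_closed subgroup.m_closed)

lemma (in group) conj_mult: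
  assumes "g \<in> carrier G" "x \<in> carrier G" "y \<in> carrier G"
  shows "inv g \<otimes> (x \<otimes> y) \<otimes> g = (inv g \<otimes> x \<otimes> g) \<otimes> (inv g \<otimes> y \<otimes> g)"
  using assms by (simp add: m_assoc) (simp add: m_assoc[symmetric])

lemma (in group) conj_nat_pow:
  assumes "g \<in> carrier G" "x \<in> carrier G"
  shows "inv g \<otimes> x [^] (n::nat) \<otimes> g = (inv g \<otimes> x \<otimes> g) [^] n"
  by (induction n) (simp_all add: assms conj_mult)

section \<open>Permutation groups\<close>

locale permutation_group =
  fixes L :: "'a set" and G :: "('a \<Rightarrow> 'a) monoid" (structure)
  assumes subgroup_Bij: "subgroup (carrier G) (BijGroup L)"
    and restrict_BijGroup: "G = (BijGroup L)\<lparr>carrier := carrier G\<rparr>"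
begin

sublocale group G
  by (subst restrict_BijGroup) (rule subgroup.subgroup_is_group[OF subgroup_Bij group_BijGroup])

lemma carrier_Bij: "g \<in> carrier G \<Longrightarrow> g \<in> Bij L"
  using subgroup.subset[OF subgroup_Bij] by (auto simp: BijGroup_def)

lemma mult_apply: "g \<in> carrier G \<Longrightarrow> h \<in> carrier G \<Longrightarrow> x \<in> L \<Longrightarrow> (g \<otimes> h) x = g (h x)"
  by (subst restrict_BijGroup) (simp add: BijGroup_def carrier_Bij compose_eq)

lemma one_apply: "x \<in> L \<Longrightarrow> \<one> x = x"
  by (subst restrict_BijGroup) (simp add: BijGroup_def)

lemma apply_closed: "g \<in> carrier G \<Longrightarrow> x \<in> L \<Longrightarrow> g x \<in> L"
  using carrier_Bij Bij_imp_funcset by blast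

lemma inj_on_carrier: "g \<in> carrier G \<Longrightarrow> inj_on g L"
  using carrier_Bij by (auto simp: Bij_def bij_betw_def)

lemma eq_if_agree: "g \<in> carrier G \<Longrightarrow> h \<in> carrier G \<Longrightarrow> (\<And>x. x \<in> L \<Longrightarrow> g x = h x) \<Longrightarrow> g = h"
  using carrier_Bij Bij_imp_extensional extensionalityI by metis

lemma inv_apply: "g \<in> carrier G \<Longrightarrow> x \<in> L \<Longrightarrow> (inv g) (g x) = x"
  using mult_apply[of "inv g" g x] one_apply by simp

lemma apply_inv: "g \<in> carrier G \<Longrightarrow> x \<in> L \<Longrightarrow> g ((inv g) x) = x"
  using mult_apply[of g "inv g" x] one_apply by simp

lemma pow_apply: "g \<in> carrier G \<Longrightarrow> x \<in> L \<Longrightarrow> (g [^] (n::nat)) x = (g ^^ n) x"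
proof (induction n arbitrary: x)
  case (Suc n)
  then show ?case
    by (simp add: nat_pow_Suc2 mult_apply apply_closed funpow_Suc_right del: funpow.simps)
qed (simp add: one_apply)

lemma commute_apply: "g \<in> carrier G \<Longrightarrow> h \<in> carrier G \<Longrightarrow> g \<otimes> h = h \<otimes> g \<Longrightarrow> x \<in> L \<Longrightarrow> g (h x) = h (g x)"
  by (metis mult_apply)

lemma finite_carrier:
  assumes "finite L" shows "finite (carrier G)"
proof (rule finite_subset)
  show "carrier G \<subseteq> extensional_funcset L L"
    using carrier_Bij by (auto simp: PiE_iff Bij_def bij_betw_def extensional_def)
  show "finite (extensional_funcset L L)"
    using assms by (simp add: finite_PiE)
qed

lemma card_orbit_times_card_stabilizer:
  assumes M: "subgroup M G" and x: "x \<in> L"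
  shows "card ((\<lambda>g. g x) ` M) * card {g \<in> M. g x = x} = card M"
proof -
  have "monoid.mult G = monoid.mult (BijGroup L)"
    by (subst restrict_BijGroup) simp
  then have "group_action (G\<lparr>carrier := M\<rparr>) L id"
    unfolding group_action_def group_hom_def group_hom_axioms_def
    using subgroup_imp_group[OF M] group_BijGroup carrier_Bij subgroup.subset[OF M]
    by (auto simp: hom_def) (auto simp: BijGroup_def)
  from group_action.orbit_stabilizer_theorem[OF this x] show ?thesis
    by (simp add: orbit_def stabilizer_def order_def Setcompr_eq_image)
qed

end

section \<open>The envelope of a loop\<close>

locale loop_envelope =
  fixes L :: "'a set" and f :: "'a \<Rightarrow> 'a \<Rightarrow> 'a" and e :: 'a and G (structure)
  assumes G_eq: "G = env_G L f" and loop: "is_loop L f e"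
begin

abbreviation "T \<equiv> env_T L f"
abbreviation "H \<equiv> env_H L f e"
abbreviation "R \<equiv> rtrans L f"

lemma identity_in_L: "e \<in> L"
  and right_identity: "x \<in> L \<Longrightarrow> f x e = x"
  and left_translation_inj: "x \<in> L \<Longrightarrow> inj_on (f x) L"
  and right_translation_bij: "a \<in> L \<Longrightarrow> bij_betw (\<lambda>x. f x a) L L"
  using loop unfolding is_loop_def by (auto simp: bij_betw_def)

lemma rtrans_apply: "x \<in> L \<Longrightarrow> R a x = f x a"
  by (simp add: rtrans_def)

lemma rtrans_Bij: "a \<in> L \<Longrightarrow> R a \<in> Bij L"
  using right_translation_bij bij_betw_cong[of L "R a" "\<lambda>x. f x a"]
  by (simp add: Bij_def rtrans_def)

sublocale permutation_group L G
proof (rule permutation_group.intro)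
  have "T \<subseteq> carrier (BijGroup L)"
    using rtrans_Bij by (auto simp: env_T_def BijGroup_def)
  then show "subgroup (carrier G) (BijGroup L)"
    unfolding G_eq env_G_def by (simp add: group.generate_is_subgroup[OF group_BijGroup])
  show "G = (BijGroup L)\<lparr>carrier := carrier G\<rparr>"
    by (simp add: G_eq env_G_def)
qed

lemma T_subset_carrier: "T \<subseteq> carrier G"
  by (auto simp: G_eq env_G_def intro: generate.incl)

lemma rtrans_in_T: "a \<in> L \<Longrightarrow> R a \<in> T"
  by (simp add: env_T_def)

lemma rtrans_identity: "a \<in> L \<Longrightarrow> R a e = a"
  using identity_in_L loop by (simp add: rtrans_apply is_loop_def)

lemma rtrans_of_identity: "R e = \<one>"
  using T_subset_carrier rtrans_in_T identity_in_L
  by (intro eq_if_agree) (auto simp: rtrans_apply right_identity one_apply)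

lemma T_eq_rtrans: "t \<in> T \<Longrightarrow> t e \<in> L \<and> R (t e) = t"
  by (auto simp: env_T_def rtrans_identity)

lemma inj_on_eval_T: "y \<in> L \<Longrightarrow> inj_on (\<lambda>t. t y) T"
  using left_translation_inj by (auto simp: env_T_def rtrans_apply inj_on_def)

lemma H_iff: "g \<in> H \<longleftrightarrow> g \<in> carrier G \<and> g e = e"
  by (simp add: env_H_def G_eq)

lemma subgroup_H: "subgroup H G"
proof -
  have "H = {g \<in> carrier G. g e = e}" by (auto simp: H_iff)
  also have "subgroup \<dots> G"
  proof (rule subgroupI)
    fix g assume "g \<in> {g \<in> carrier G. g e = e}"
    then show "inv g \<in> {g \<in> carrier G. g e = e}"
      using inv_apply[of g e] identity_in_L by auto
  qed (use identity_in_L in \<open>auto simp: one_apply mult_apply\<close>)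
  finally show ?thesis .
qed

lemma rtrans_orbit_in_subgroup:
  assumes K: "subgroup K G" "H \<subseteq> K" and k: "k \<in> K"
  shows "R (k e) \<in> K"
proof -
  have kG: "k \<in> carrier G" using K(1) k subgroup.subset by blast
  have keL: "k e \<in> L" using apply_closed[OF kG identity_in_L] .
  have RG: "R (k e) \<in> carrier G" using T_subset_carrier rtrans_in_T[OF keL] by blast
  have "(inv (R (k e))) (k e) = e"
    using inv_apply[OF RG identity_in_L] rtrans_identity[OF keL] by simp
  then have "inv (R (k e)) \<otimes> k \<in> H"
    using RG kG by (simp add: H_iff mult_apply identity_in_L)
  then have "k \<otimes> inv (inv (R (k e)) \<otimes> k) \<in> K"
    using K k by (blast intro: subgroup.m_closed subgroup.m_inv_closed)
  then show ?thesis using RG kG by (simp add: inv_mult_group m_assoc[symmetric])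
qed

end

section \<open>Right conjugacy closed loops of order 2p\<close>

locale rcc_envelope_index_p = loop_envelope +
  fixes p :: nat and K :: "('a \<Rightarrow> 'a) set"
  assumes prime_p: "Factorial_Ring.prime p" and finite_L: "finite L"
    and rcc: "right_cc L f" and card_L: "card L = 2 * p"
    and subgroup_K: "subgroup K G" and H_subset_K: "H \<subseteq> K" and K_proper: "K \<noteq> carrier G"
    and index_H_K: "card (rcosets\<^bsub>G\<lparr>carrier := K\<rparr>\<^esub> H) = p"
begin

definition K_orbit :: "'a set" where
  "K_orbit = (\<lambda>k. k e) ` K"

lemma finite_G: "finite (carrier G)"
  using finite_L by (rule finite_carrier)

lemma K_subset_carrier: "K \<subseteq> carrier G"
  using subgroup_K subgroup.subset by blast

lemma K_orbit_subset: "K_orbit \<subseteq> L"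
  using K_subset_carrier apply_closed identity_in_L by (auto simp: K_orbit_def)

lemma identity_in_K_orbit: "e \<in> K_orbit"
  using subgroup.one_closed[OF subgroup_K] one_apply[OF identity_in_L]
  unfolding K_orbit_def by (metis image_eqI)

lemma K_orbit_closed:
  assumes "k \<in> K" "x \<in> K_orbit" shows "k x \<in> K_orbit"
proof -
  obtain k' where "k' \<in> K" "x = k' e" using assms(2) by (auto simp: K_orbit_def)
  moreover have "k \<in> carrier G" "k' \<in> carrier G"
    using assms(1) \<open>k' \<in> K\<close> K_subset_carrier by auto
  ultimately have "k x = (k \<otimes> k') e" "k \<otimes> k' \<in> K"
    using assms(1) identity_in_L subgroup.m_closed[OF subgroup_K] by (auto simp: mult_apply)
  then show ?thesis by (simp add: K_orbit_def)
qed

lemma K_orbit_complement_closed: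
  assumes k: "k \<in> K" and y: "y \<in> L - K_orbit" shows "k y \<in> L - K_orbit"
proof -
  have kG: "k \<in> carrier G" using k K_subset_carrier by blast
  have "k y \<notin> K_orbit"
    using K_orbit_closed[OF subgroup.m_inv_closed[OF subgroup_K k]] inv_apply[OF kG] y by force
  then show ?thesis using apply_closed[OF kG] y by blast
qed

lemma T_Int_K_eq: "T \<inter> K = R ` K_orbit"
proof
  show "T \<inter> K \<subseteq> R ` K_orbit"
    using T_eq_rtrans by (force simp: K_orbit_def)
  show "R ` K_orbit \<subseteq> T \<inter> K"
    using rtrans_orbit_in_subgroup[OF subgroup_K H_subset_K] rtrans_in_T K_orbit_subset
    by (auto simp: K_orbit_def)
qed

lemma card_K_orbit: "card K_orbit = p"
proof -
  have "H = {k \<in> K. k e = e}"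
    using H_subset_K K_subset_carrier by (auto simp: H_iff)
  then have "card K_orbit * card H = card K"
    using card_orbit_times_card_stabilizer[OF subgroup_K identity_in_L] by (simp add: K_orbit_def)
  moreover have "p * card H = card K"
    using group.lagrange[OF subgroup_imp_group[OF subgroup_K] subgroup_incl[OF subgroup_H subgroup_K H_subset_K]]
    by (simp add: index_H_K order_def)
  moreover have "card H \<noteq> 0"
    using subgroup.one_closed[OF subgroup_H] finite_subset[OF subgroup.subset[OF subgroup_H] finite_G]
    by auto
  ultimately show ?thesis by (metis mult_right_cancel)
qed

lemma card_K_orbit_complement: "card (L - K_orbit) = p"
  using card_L card_K_orbit K_orbit_subset finite_L by (simp add: card_Diff_subset finite_subset)

lemma card_T_Int_K: "card (T \<inter> K) = p"
proof -
  have "inj_on R K_orbit"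
    by (rule inj_onI) (metis K_orbit_subset rtrans_identity subsetD)
  then show ?thesis by (simp add: T_Int_K_eq card_image card_K_orbit)
qed

lemma T_Int_K_subset_carrier: "T \<inter> K \<subseteq> carrier G"
  using K_subset_carrier by blast

lemma one_in_T_Int_K: "\<one> \<in> T \<inter> K"
  using T_Int_K_eq identity_in_K_orbit rtrans_of_identity by force

lemma conj_T: "g \<in> carrier G \<Longrightarrow> t \<in> T \<Longrightarrow> g \<otimes> t \<otimes> inv g \<in> T"
  using rcc by (simp add: right_cc_def G_eq)

lemma conj_T_Int_K:
  assumes g: "g \<in> K" and s: "s \<in> T \<inter> K" shows "g \<otimes> s \<otimes> inv g \<in> T \<inter> K"
proof
  show "g \<otimes> s \<otimes> inv g \<in> T" using conj_T g s K_subset_carrier by blast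
  show "g \<otimes> s \<otimes> inv g \<in> K"
    using g s by (intro subgroup.m_closed[OF subgroup_K] subgroup.m_inv_closed[OF subgroup_K]) auto
qed

lemma outside_K_maps_K_orbit:
  assumes g: "g \<in> carrier G" "g \<notin> K" and x: "x \<in> K_orbit" shows "g x \<in> L - K_orbit"
proof
  show "g x \<in> L" using x K_orbit_subset apply_closed[OF g(1)] by blast
  show "g x \<notin> K_orbit"
  proof
    assume "g x \<in> K_orbit"
    then obtain k k' where k: "k \<in> K" "x = k e" and k': "k' \<in> K" "g x = k' e"
      using x by (auto simp: K_orbit_def)
    have kG: "k \<in> carrier G" "k' \<in> carrier G" using k k' K_subset_carrier by auto
    have "(inv k' \<otimes> g \<otimes> k) e = e"
      using g kG k k' identity_in_L by (simp add: mult_apply apply_closed inv_apply)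
    then have "inv k' \<otimes> g \<otimes> k \<in> K"
      using g kG H_subset_K by (auto simp: H_iff)
    then have "k' \<otimes> (inv k' \<otimes> g \<otimes> k) \<otimes> inv k \<in> K"
      using k k' subgroup.m_closed[OF subgroup_K] subgroup.m_inv_closed[OF subgroup_K] by blast
    moreover have "k' \<otimes> (inv k' \<otimes> g \<otimes> k) \<otimes> inv k = g"
      using g kG by (simp add: m_assoc[symmetric]) (simp add: m_assoc)
    ultimately show False using g by simp
  qed
qed

lemma outside_K_image_K_orbit:
  assumes g: "g \<in> carrier G" "g \<notin> K" shows "g ` K_orbit = L - K_orbit"
proof (rule card_subset_eq)
  show "finite (L - K_orbit)" using finite_L by blast
  show "g ` K_orbit \<subseteq> L - K_orbit" using outside_K_maps_K_orbit[OF g] by blast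
  show "card (g ` K_orbit) = card (L - K_orbit)"
    using card_K_orbit card_K_orbit_complement inj_on_subset[OF inj_on_carrier[OF g(1)] K_orbit_subset]
    by (simp add: card_image)
qed

lemma conj_outside_T_Int_K:
  assumes g: "g \<in> carrier G" "g \<notin> K" and s: "s \<in> T \<inter> K"
  shows "inv g \<otimes> s \<otimes> g \<in> T \<inter> K"
proof -
  have sG: "s \<in> carrier G" using s K_subset_carrier by blast
  let ?t = "inv g \<otimes> s \<otimes> g"
  have "?t \<in> T"
    using conj_T[of "inv g" s] g s by simp
  have "s (g e) \<in> L - K_orbit"
    using K_orbit_complement_closed s outside_K_maps_K_orbit[OF g identity_in_K_orbit] by blast
  then obtain x where x: "x \<in> K_orbit" "s (g e) = g x"
    using outside_K_image_K_orbit[OF g] by auto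
  have "?t e = x"
    using g sG x identity_in_L K_orbit_subset by (simp add: mult_apply apply_closed inv_apply subset_iff)
  then have "?t = R x"
    using T_eq_rtrans[OF \<open>?t \<in> T\<close>] by simp
  then show ?thesis using T_Int_K_eq x by simp
qed

lemma exists_p_element:
  obtains c k where "c \<in> K" "c e \<noteq> e" "c [^] (p ^ k) = \<one>"
proof -
  interpret K: group "G\<lparr>carrier := K\<rparr>" by (rule subgroup_imp_group[OF subgroup_K])
  obtain c k where "c \<in> K" "c \<notin> H" "c [^]\<^bsub>G\<lparr>carrier := K\<rparr>\<^esub> (p ^ k) = \<one>"
    using K.p_element_outside_subgroup[OF prime_p _ subgroup_incl[OF subgroup_H subgroup_K H_subset_K]]
      finite_subset[OF K_subset_carrier finite_G] index_H_K by auto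
  then show thesis
    using that K_subset_carrier by (auto simp: H_iff nat_pow_def)
qed

end

locale rcc_envelope_p_element = rcc_envelope_index_p +
  fixes c and k :: nat
  assumes c_in_K: "c \<in> K" and c_moves_e: "c e \<noteq> e" and c_p_power: "c [^] (p ^ k) = \<one>"
begin

lemma c_in_carrier: "c \<in> carrier G"
  using c_in_K K_subset_carrier by blast

lemma c_pow_in_K: "c [^] (i::nat) \<in> K"
  by (rule subgroup_nat_pow_closed[OF subgroup_K c_in_K])

lemma K_orbit_c_cycle: "K_orbit = (\<lambda>i. (c [^] i) e) ` {..<p} \<and> (c [^] p) e = e"
proof -
  have funpow_c: "(c ^^ i) e = (c [^] i) e" for i :: nat
    using pow_apply[OF c_in_carrier identity_in_L] by simp
  have "(c ^^ (p ^ k)) e = e"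
    using c_p_power one_apply[OF identity_in_L] by (simp add: funpow_c)
  from funpow_prime_power_period[OF prime_p this c_moves_e]
  obtain m where m: "p \<le> m" "(c ^^ m) e = e" "inj_on (\<lambda>i. (c ^^ i) e) {..<m}" .
  have sub: "(\<lambda>i. (c [^] i) e) ` {..<n} \<subseteq> K_orbit" for n :: nat
    unfolding K_orbit_def using c_pow_in_K by blast
  have inj: "inj_on (\<lambda>i. (c [^] i) e) {..<m}"
    using m(3) by (simp add: funpow_c)
  have "m \<le> p"
    using card_mono[OF finite_subset[OF K_orbit_subset finite_L] sub[of m]] inj card_K_orbit
    by (simp add: card_image)
  then have "m = p" using m(1) by simp
  then show ?thesis
    using card_subset_eq[OF finite_subset[OF K_orbit_subset finite_L] sub[of p]] inj card_K_orbit m(2)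
    by (simp add: card_image funpow_c)
qed

lemma T_Int_K_commute_c:
  assumes s: "s \<in> T \<inter> K" shows "s \<otimes> c = c \<otimes> s"
proof -
  define \<phi> where "\<phi> = (\<lambda>t. c \<otimes> t \<otimes> inv c)"
  have sG: "s \<in> carrier G" using s K_subset_carrier by blast
  have \<phi>_pow: "(\<phi> ^^ i) s = c [^] i \<otimes> s \<otimes> inv (c [^] i)" for i :: nat
    unfolding \<phi>_def by (rule conjugation_funpow[OF c_in_carrier sG])
  txt \<open>\<phi> permutes the p - 1 nontrivial elements of T \<inter> K, and its orbits have p-power length.\<close>
  have "\<phi> s = s"
  proof (rule ccontr)
    assume moved: "\<phi> s \<noteq> s"
    have "(\<phi> ^^ (p ^ k)) s = s" using \<phi>_pow c_p_power sG by simp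
    from funpow_prime_power_period[OF prime_p this moved]
    obtain m where m: "p \<le> m" "inj_on (\<lambda>i. (\<phi> ^^ i) s) {..<m}" by blast
    have "s \<noteq> \<one>" using moved c_in_carrier by (auto simp: \<phi>_def)
    then have "(\<phi> ^^ i) s \<in> (T \<inter> K) - {\<one>}" for i :: nat
      using \<phi>_pow conj_T_Int_K[OF c_pow_in_K s] c_in_carrier sG by (simp add: inv_solve_right')
    then have "card ((\<lambda>i. (\<phi> ^^ i) s) ` {..<m}) \<le> card ((T \<inter> K) - {\<one>})"
      using finite_subset[OF T_Int_K_subset_carrier finite_G]
      by (intro card_mono) auto
    then have "m \<le> p - 1"
      using m(2) card_T_Int_K one_in_T_Int_K by (simp add: card_image)
    then show False using m(1) prime_gt_0_nat[OF prime_p] by linarith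
  qed
  then show ?thesis using c_in_carrier sG by (simp add: \<phi>_def inv_solve_right')
qed

lemma subgroup_centralizer_c: "subgroup (centralizer G {c}) G"
  using c_in_carrier by (intro subgroup_centralizer) auto

lemma T_Int_K_centralize_c: "T \<inter> K \<subseteq> centralizer G {c}"
  using T_Int_K_commute_c K_subset_carrier by (auto simp: centralizer_def)

lemma centralizer_c_pow_apply:
  assumes "z \<in> centralizer G {c}" "x \<in> L"
  shows "z ((c [^] (i::nat)) x) = (c [^] i) (z x)"
  using assms c_in_carrier by (intro commute_apply) (auto simp: centralizer_def group_commutes_pow[symmetric])

lemma c_pow_apply_add: "x \<in> L \<Longrightarrow> (c [^] (a::nat)) ((c [^] (b::nat)) x) = (c [^] (a + b)) x"
  using mult_apply[of "c [^] a" "c [^] b" x] nat_pow_mult[OF c_in_carrier, of a b] c_in_carrier by simp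

lemma agree_on_K_orbit:
  assumes "z \<in> centralizer G {c}" "w \<in> centralizer G {c}" "z e = w e" and x: "x \<in> K_orbit"
  shows "z x = w x"
proof -
  obtain i :: nat where "x = (c [^] i) e" using x K_orbit_c_cycle by auto
  then show ?thesis
    using centralizer_c_pow_apply[OF assms(1) identity_in_L] centralizer_c_pow_apply[OF assms(2) identity_in_L]
      assms(3) by simp
qed

lemma T_Int_K_at_e:
  assumes "s \<in> T \<inter> K" obtains j :: nat where "s e = (c [^] j) e"
  using assms K_orbit_c_cycle by (auto simp: K_orbit_def)

lemma T_Int_K_commute_on_K_orbit:
  assumes s1: "s1 \<in> T \<inter> K" and s2: "s2 \<in> T \<inter> K" and x: "x \<in> K_orbit"
  shows "(s1 \<otimes> s2) x = (s2 \<otimes> s1) x"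
proof (rule agree_on_K_orbit[OF _ _ _ x])
  have C: "s1 \<in> centralizer G {c}" "s2 \<in> centralizer G {c}"
    using s1 s2 T_Int_K_centralize_c by auto
  then show "s1 \<otimes> s2 \<in> centralizer G {c}" "s2 \<otimes> s1 \<in> centralizer G {c}"
    using subgroup.m_closed[OF subgroup_centralizer_c] by blast+
  have G: "s1 \<in> carrier G" "s2 \<in> carrier G" using s1 s2 K_subset_carrier by auto
  obtain j1 :: nat where j1: "s1 e = (c [^] j1) e" by (rule T_Int_K_at_e[OF s1])
  obtain j2 :: nat where j2: "s2 e = (c [^] j2) e" by (rule T_Int_K_at_e[OF s2])
  note j = j1 j2
  have "(s1 \<otimes> s2) e = (c [^] j2) ((c [^] j1) e)"
    using G j centralizer_c_pow_apply[OF C(1) identity_in_L] identity_in_L by (simp add: mult_apply)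
  also have "\<dots> = (c [^] j1) ((c [^] j2) e)"
    using c_pow_apply_add[OF identity_in_L] by (simp add: add.commute)
  also have "\<dots> = (s2 \<otimes> s1) e"
    using G j centralizer_c_pow_apply[OF C(2) identity_in_L] identity_in_L by (simp add: mult_apply)
  finally show "(s1 \<otimes> s2) e = (s2 \<otimes> s1) e" .
qed

lemma T_Int_K_pow_on_K_orbit:
  assumes s: "s \<in> T \<inter> K" and x: "x \<in> K_orbit"
  shows "(s [^] p) x = x"
proof -
  have C: "s \<in> centralizer G {c}" using s T_Int_K_centralize_c by blast
  have sG: "s \<in> carrier G" using s K_subset_carrier by blast
  have C_pow: "s [^] n \<in> centralizer G {c}" for n :: nat
    using subgroup_nat_pow_closed[OF subgroup_centralizer_c C] .
  obtain j :: nat where j: "s e = (c [^] j) e" by (rule T_Int_K_at_e[OF s])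
  have pow_e: "(s [^] n) e = (c [^] (j * n)) e" for n :: nat
  proof (induction n)
    case (Suc n)
    have "(s [^] Suc n) e = (s [^] n) ((c [^] j) e)"
      using sG j identity_in_L by (simp add: mult_apply)
    also have "\<dots> = (c [^] j) ((s [^] n) e)"
      using centralizer_c_pow_apply[OF C_pow identity_in_L] by simp
    also have "\<dots> = (c [^] (j * Suc n)) e"
      using Suc c_pow_apply_add[OF identity_in_L] by simp
    finally show ?case .
  qed (simp add: one_apply identity_in_L)
  have "(c [^] p) [^] j \<in> H"
    using subgroup_nat_pow_closed[OF subgroup_H, of "c [^] p" j] K_orbit_c_cycle c_in_carrier by (simp add: H_iff)
  then have "(s [^] p) e = \<one> e"
    using pow_e[of p] c_in_carrier identity_in_L by (simp add: H_iff nat_pow_pow one_apply mult.commute)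
  then show ?thesis
    using agree_on_K_orbit[OF C_pow subgroup.one_closed[OF subgroup_centralizer_c] _ x]
      one_apply K_orbit_subset x by auto
qed

lemma eq_if_agree_on_K_orbit_and_conj:
  assumes g: "g \<in> carrier G" "g \<notin> K" and zw: "z \<in> carrier G" "w \<in> carrier G"
    and agree: "\<And>x. x \<in> K_orbit \<Longrightarrow> z x = w x"
    and agree_conj: "\<And>x. x \<in> K_orbit \<Longrightarrow> (inv g \<otimes> z \<otimes> g) x = (inv g \<otimes> w \<otimes> g) x"
  shows "z = w"
proof (rule eq_if_agree[OF zw])
  fix y assume y: "y \<in> L"
  show "z y = w y"
  proof (cases "y \<in> K_orbit")
    case False
    then obtain x where x: "x \<in> K_orbit" "y = g x"
      using y outside_K_image_K_orbit[OF g] by auto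
    have "(inv g) (z y) = (inv g) (w y)"
      using agree_conj[OF x(1)] g(1) zw x K_orbit_subset by (simp add: mult_apply apply_closed subset_iff)
    then show ?thesis
      using apply_inv[OF g(1)] apply_closed zw y by metis
  qed (rule agree)
qed

lemma T_Int_K_commute:
  assumes s1: "s1 \<in> T \<inter> K" and s2: "s2 \<in> T \<inter> K"
  shows "s1 \<otimes> s2 = s2 \<otimes> s1"
proof -
  obtain g where g: "g \<in> carrier G" "g \<notin> K" using K_proper K_subset_carrier by blast
  have G: "s1 \<in> carrier G" "s2 \<in> carrier G" using s1 s2 K_subset_carrier by auto
  show ?thesis
  proof (rule eq_if_agree_on_K_orbit_and_conj[OF g])
    fix x assume x: "x \<in> K_orbit"
    show "(s1 \<otimes> s2) x = (s2 \<otimes> s1) x" by (rule T_Int_K_commute_on_K_orbit[OF s1 s2 x])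
    show "(inv g \<otimes> (s1 \<otimes> s2) \<otimes> g) x = (inv g \<otimes> (s2 \<otimes> s1) \<otimes> g) x"
      using T_Int_K_commute_on_K_orbit[OF conj_outside_T_Int_K[OF g s1] conj_outside_T_Int_K[OF g s2] x]
      by (simp add: conj_mult g G)
  qed (use G in auto)
qed

lemma T_Int_K_pow_p:
  assumes s: "s \<in> T \<inter> K" shows "s [^] p = \<one>"
proof -
  obtain g where g: "g \<in> carrier G" "g \<notin> K" using K_proper K_subset_carrier by blast
  have sG: "s \<in> carrier G" using s K_subset_carrier by blast
  show ?thesis
  proof (rule eq_if_agree_on_K_orbit_and_conj[OF g])
    fix x assume x: "x \<in> K_orbit"
    then have xL: "x \<in> L" using K_orbit_subset by blast
    show "(s [^] p) x = \<one> x" using T_Int_K_pow_on_K_orbit[OF s x] one_apply[OF xL] by simp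
    show "(inv g \<otimes> s [^] p \<otimes> g) x = (inv g \<otimes> \<one> \<otimes> g) x"
      using T_Int_K_pow_on_K_orbit[OF conj_outside_T_Int_K[OF g s] x] one_apply[OF xL] g sG
      by (simp add: conj_nat_pow)
  qed (use sG in auto)
qed

abbreviation "K1 \<equiv> generate G (T \<inter> K)"

lemma subgroup_K1: "subgroup K1 G"
  using T_Int_K_subset_carrier by (rule generate_is_subgroup)

lemma K1_subset_K: "K1 \<subseteq> K"
  using subgroup_K by (intro generate_subgroup_incl) auto

lemma K1_commute: "x \<in> K1 \<Longrightarrow> y \<in> K1 \<Longrightarrow> x \<otimes> y = y \<otimes> x"
  using generate_commute[OF T_Int_K_subset_carrier T_Int_K_commute] .

lemma K1_pow_p: "x \<in> K1 \<Longrightarrow> x [^] p = \<one>"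
  using generate_pow_eq_one[OF T_Int_K_subset_carrier T_Int_K_commute T_Int_K_pow_p] .

lemma elem_abelian_K1: "elem_abelian (G\<lparr>carrier := K1\<rparr>) p"
proof -
  interpret K1: group "G\<lparr>carrier := K1\<rparr>" by (rule subgroup_imp_group[OF subgroup_K1])
  have "comm_group (G\<lparr>carrier := K1\<rparr>)"
    by (rule K1.group_comm_groupI) (simp add: K1_commute)
  then show ?thesis
    using K1_pow_p by (simp add: elem_abelian_def nat_pow_def)
qed

lemma card_K1: "card K1 = p * card (H \<inter> K1)"
proof -
  have "(\<lambda>z. z e) ` K1 = K_orbit"
  proof
    show "(\<lambda>z. z e) ` K1 \<subseteq> K_orbit" using K1_subset_K by (auto simp: K_orbit_def)
    show "K_orbit \<subseteq> (\<lambda>z. z e) ` K1"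
    proof
      fix x assume "x \<in> K_orbit"
      then have "R x \<in> K1" "R x e = x"
        using T_Int_K_eq K_orbit_subset rtrans_identity by (auto intro: generate.incl)
      then show "x \<in> (\<lambda>z. z e) ` K1" by (metis image_eqI)
    qed
  qed
  moreover have "{z \<in> K1. z e = e} = H \<inter> K1"
    using subgroup.subset[OF subgroup_K1] by (auto simp: H_iff)
  ultimately show ?thesis
    using card_orbit_times_card_stabilizer[OF subgroup_K1 identity_in_L] card_K_orbit by simp
qed

lemma T_Int_K_transitive_on_complement:
  assumes y: "y \<in> L - K_orbit" shows "(\<lambda>s. s y) ` (T \<inter> K) = L - K_orbit"
proof (rule card_subset_eq)
  show "finite (L - K_orbit)" using finite_L by blast
  show "(\<lambda>s. s y) ` (T \<inter> K) \<subseteq> L - K_orbit"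
    using K_orbit_complement_closed[OF _ y] by auto
  have "inj_on (\<lambda>s. s y) (T \<inter> K)"
    using y by (intro inj_on_subset[OF inj_on_eval_T]) auto
  then have "card ((\<lambda>s. s y) ` (T \<inter> K)) = p"
    using card_T_Int_K by (simp add: card_image)
  then show "card ((\<lambda>s. s y) ` (T \<inter> K)) = card (L - K_orbit)"
    by (simp add: card_K_orbit_complement)
qed

lemma K1_agree_propagates:
  assumes "z \<in> K1" "w \<in> K1" "y \<in> L" "z y = w y" "s \<in> T \<inter> K"
  shows "z (s y) = w (s y)"
proof -
  have s: "s \<in> K1" using assms(5) by (rule generate.incl)
  have G: "z \<in> carrier G" "w \<in> carrier G" "s \<in> carrier G"
    using assms(1,2) s subgroup.subset[OF subgroup_K1] by auto
  have "z (s y) = s (z y)" using commute_apply[OF G(1,3) K1_commute[OF assms(1) s] assms(3)] .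
  also have "\<dots> = w (s y)" using commute_apply[OF G(2,3) K1_commute[OF assms(2) s] assms(3)] assms(4) by simp
  finally show ?thesis .
qed

lemma T_Int_K_orbits_cover:
  assumes x: "x \<in> L" and y: "y \<in> L - K_orbit"
  obtains s where "s \<in> T \<inter> K" "x = s e \<or> x = s y"
proof (cases "x \<in> K_orbit")
  case True
  then have "R x \<in> T \<inter> K" "R x e = x"
    using T_Int_K_eq K_orbit_subset rtrans_identity by auto
  then show thesis using that by metis
next
  case False
  then show thesis using that T_Int_K_transitive_on_complement[OF y] x by blast
qed

lemma H_Int_K1_eq_if_agree_at:
  assumes z: "z \<in> H \<inter> K1" and w: "w \<in> H \<inter> K1" and y: "y \<in> L - K_orbit" and zw: "z y = w y"
  shows "z = w"
proof (rule eq_if_agree)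
  have zw_K1: "z \<in> K1" "w \<in> K1" using z w by auto
  have zw_e: "z e = w e" using z w by (simp add: H_iff)
  fix x assume "x \<in> L"
  then obtain s where s: "s \<in> T \<inter> K" and "x = s e \<or> x = s y"
    using y by (rule T_Int_K_orbits_cover)
  then show "z x = w x"
    using K1_agree_propagates[OF zw_K1 identity_in_L zw_e s]
      K1_agree_propagates[OF zw_K1 _ zw s] y by auto
qed (use z w subgroup.subset[OF subgroup_H] in auto)

lemma card_H_Int_K1_le: "card (H \<inter> K1) \<le> p"
proof -
  have "L - K_orbit \<noteq> {}"
    using card_K_orbit_complement prime_gt_0_nat[OF prime_p] by force
  then obtain y where y: "y \<in> L - K_orbit" by blast
  have "inj_on (\<lambda>z. z y) (H \<inter> K1)"
    using H_Int_K1_eq_if_agree_at[OF _ _ y] by (rule inj_onI)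
  moreover have "(\<lambda>z. z y) ` (H \<inter> K1) \<subseteq> L - K_orbit"
    using K_orbit_complement_closed y K1_subset_K by blast
  ultimately have "card (H \<inter> K1) \<le> card (L - K_orbit)"
    using finite_L by (simp add: card_image[symmetric] card_mono)
  also have "\<dots> = p" by (rule card_K_orbit_complement)
  finally show ?thesis .
qed

lemma card_H_Int_K1: "card (H \<inter> K1) \<in> {1, p}"
proof (rule card_subgroup_of_prime_exponent[OF prime_p])
  show "subgroup (H \<inter> K1) G" by (rule subgroups_Inter_pair[OF subgroup_H subgroup_K1])
  show "finite (H \<inter> K1)"
    using finite_subset[OF _ finite_G] subgroup.subset[OF subgroup_K1] by blast
qed (use K1_pow_p card_H_Int_K1_le in auto)

end

theorem corollary5p3:
  fixes L :: "'a set" and f :: "'a \<Rightarrow> 'a \<Rightarrow> 'a" and e :: 'a and p :: nat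
    and K :: "('a \<Rightarrow> 'a) set"
  assumes "Factorial_Ring.prime p" and "odd p"
    and "finite L" and "is_loop L f e" and "right_cc L f"
    and "card L = 2 * p"
    and "subgroup K (env_G L f)"
    and "env_H L f e \<subset> K" and "K \<subset> carrier (env_G L f)"
    and "card (rcosets\<^bsub>env_G L f\<^esub> K) = 2"
    and "card (rcosets\<^bsub>(env_G L f)\<lparr>carrier := K\<rparr>\<^esub> (env_H L f e)) = p"
  shows "let G = env_G L f;
             K1 = generate G (env_T L f \<inter> K);
             H1 = env_H L f e \<inter> K1
         in card H1 \<in> {1, p} \<and> elem_abelian (G\<lparr>carrier := K1\<rparr>) p
            \<and> card K1 \<in> {p, p^2}"
proof -
  have "env_H L f e \<subseteq> K" "K \<noteq> carrier (env_G L f)" using assms(8,9) by auto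
  with assms interpret rcc_envelope_index_p L f e "env_G L f" p K
    by (intro rcc_envelope_index_p.intro loop_envelope.intro rcc_envelope_index_p_axioms.intro) simp_all
  obtain c k where "c \<in> K" "c e \<noteq> e" "c [^]\<^bsub>env_G L f\<^esub> (p ^ k) = \<one>\<^bsub>env_G L f\<^esub>"
    by (rule exists_p_element)
  then interpret rcc_envelope_p_element L f e "env_G L f" p K c k
    by (intro rcc_envelope_p_element.intro rcc_envelope_p_element_axioms.intro) unfold_locales
  have "card K1 \<in> {p, p^2}"
    using card_K1 card_H_Int_K1 by (auto simp: power2_eq_square)
  then show ?thesis
    using card_H_Int_K1 elem_abelian_K1 by (simp add: Let_def)
qed

end
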